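(* Let $f\colon M\to G$ be an epimorphism in the category $\mathbf{TGr}$ of Hausdorff topological groups and continuous homomorphisms, and let $H$ be the closure of the subgroup $f(M)$ in $G$. If any one of the following conditions holds, then $f(M)$ is dense in $G$: (1) the right uniformity $\mathcal U_r$ on the coset space $G/H$ is non-archimedean; (2) $G$ is a non-archimedean topological group; (3) $H$ is open in $G$.
   Context: A morphism $f\colon M\to G$ in $\mathbf{TGr}$ is an epimorphism if there is no pair of distinct continuous homomorphisms $g,h\colon G\to P$ into a Hausdorff topological group $P$ with $g\circ f=h\circ f$. A topological group is non-archimedean if it has a local base at the identity consisting of open subgroups. For a closed subgroup $H$ of $G$, the right uniformity $\mathcal U_r$ on the left coset space $G/H$ is the uniformity with base the entourages $\tilde U=\{(aH,bH): bH\subseteq UaH\}$, $U$ ranging over the neighborhoods of the identity in $G$. A uniformity is non-archimedean if it has a base consisting of equivalence relations. *)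

theory Defs
  imports "HOL-Analysis.Product_Topology" "HOL-Analysis.T1_Spaces" "HOL-Algebra.Coset"
begin

definition topological_group :: "'a monoid \<Rightarrow> 'a topology \<Rightarrow> bool" where
  "topological_group G T \<longleftrightarrow> group G \<and> topspace T = carrier G \<and>
     continuous_map (prod_topology T T) T (\<lambda>(x, y). x \<otimes>\<^bsub>G\<^esub> y) \<and>
     continuous_map T T (\<lambda>x. inv\<^bsub>G\<^esub> x)"

definition haus_topgroup :: "'a monoid \<Rightarrow> 'a topology \<Rightarrow> bool" where
  "haus_topgroup G T \<longleftrightarrow> topological_group G T \<and> Hausdorff_space T"

definition cont_hom :: "'a monoid \<Rightarrow> 'a topology \<Rightarrow> 'b monoid \<Rightarrow> 'b topology \<Rightarrow> ('a \<Rightarrow> 'b) \<Rightarrow> bool" where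
  "cont_hom G TG P TP g \<longleftrightarrow> g \<in> hom G P \<and> continuous_map TG TP g"

definition tgr_epi :: "'m monoid \<Rightarrow> 'm topology \<Rightarrow> 'g monoid \<Rightarrow> 'g topology \<Rightarrow> ('m \<Rightarrow> 'g) \<Rightarrow> bool" where
  "tgr_epi M TM G TG f \<longleftrightarrow> haus_topgroup M TM \<and> haus_topgroup G TG \<and> cont_hom M TM G TG f \<and>
     (\<forall>(P :: 'g list monoid) TP g h.
        haus_topgroup P TP \<and> cont_hom G TG P TP g \<and> cont_hom G TG P TP h \<and>
        (\<forall>x\<in>carrier M. g (f x) = h (f x)) \<longrightarrow> (\<forall>y\<in>carrier G. g y = h y))"

definition nhd_one :: "'a monoid \<Rightarrow> 'a topology \<Rightarrow> 'a set \<Rightarrow> bool" where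
  "nhd_one G T U \<longleftrightarrow> U \<subseteq> topspace T \<and> (\<exists>W. openin T W \<and> \<one>\<^bsub>G\<^esub> \<in> W \<and> W \<subseteq> U)"

definition non_archimedean_group :: "'a monoid \<Rightarrow> 'a topology \<Rightarrow> bool" where
  "non_archimedean_group G T \<longleftrightarrow>
     (\<forall>U. openin T U \<and> \<one>\<^bsub>G\<^esub> \<in> U \<longrightarrow>
        (\<exists>V. subgroup V G \<and> openin T V \<and> V \<subseteq> U))"

definition lcosets :: "'a monoid \<Rightarrow> 'a set \<Rightarrow> 'a set set" where
  "lcosets G H = {a <#\<^bsub>G\<^esub> H | a. a \<in> carrier G}"

definition right_entourage :: "'a monoid \<Rightarrow> 'a set \<Rightarrow> 'a set \<Rightarrow> ('a set \<times> 'a set) set" where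
  "right_entourage G H U = {(a <#\<^bsub>G\<^esub> H, b <#\<^bsub>G\<^esub> H) | a b.
      a \<in> carrier G \<and> b \<in> carrier G \<and> b <#\<^bsub>G\<^esub> H \<subseteq> U <#>\<^bsub>G\<^esub> (a <#\<^bsub>G\<^esub> H)}"

definition right_unif_entourage :: "'a monoid \<Rightarrow> 'a topology \<Rightarrow> 'a set \<Rightarrow> ('a set \<times> 'a set) set \<Rightarrow> bool" where
  "right_unif_entourage G T H E \<longleftrightarrow> E \<subseteq> lcosets G H \<times> lcosets G H \<and>
     (\<exists>U. nhd_one G T U \<and> right_entourage G H U \<subseteq> E)"

definition right_unif_non_archimedean :: "'a monoid \<Rightarrow> 'a topology \<Rightarrow> 'a set \<Rightarrow> bool" where
  "right_unif_non_archimedean G T H \<longleftrightarrow>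
     (\<forall>E. right_unif_entourage G T H E \<longrightarrow>
        (\<exists>R. right_unif_entourage G T H R \<and> equiv (lcosets G H) R \<and> R \<subseteq> E))"

end

theory Submission
  imports Defs
begin

text \<open>Let B be the Boolean group of finite sets of left cosets of the closed subgroup H, on
  which G acts by translation, and fix a directed family of equivalence relations on G/H
  that separates points and is compatible with the action: the equivalence entourages of the
  right uniformity in case (1), to which case (2) reduces, and the identity relation in case (3).
  Declaring the subgroups of B generated by the pairs {y, z} with y R z to be a neighbourhood
  base at the empty set makes the semidirect product of B and G a Hausdorff topological group;
  it is Hausdorff because every element of such a subgroup meets each R-class in an even number
  of points.
  The continuous homomorphisms x \<mapsto> ({}, x) and x \<mapsto> (symdiff {H} {xH}, x) agree exactly on H, which
  contains f(M); so an epimorphism f forces H = G.\<close>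

lemma topspace_topological_group: "topological_group G T \<Longrightarrow> topspace T = carrier G"
  by (simp add: topological_group_def)

lemma continuous_map_group_mult:
  assumes "topological_group G T" "continuous_map Z T a" "continuous_map Z T b"
  shows "continuous_map Z T (\<lambda>z. a z \<otimes>\<^bsub>G\<^esub> b z)"
proof -
  have "continuous_map Z (prod_topology T T) (\<lambda>z. (a z, b z))"
    using assms(2,3) by (simp add: continuous_map_paired)
  moreover have "continuous_map (prod_topology T T) T (\<lambda>(x, y). x \<otimes>\<^bsub>G\<^esub> y)"
    using assms(1) by (simp add: topological_group_def)
  ultimately show ?thesis
    by (auto dest: continuous_map_compose simp: o_def)
qed

lemma continuous_map_group_inv:
  assumes "topological_group G T" "continuous_map Z T a"
  shows "continuous_map Z T (\<lambda>z. inv\<^bsub>G\<^esub> a z)"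
proof -
  have "continuous_map T T (\<lambda>x. inv\<^bsub>G\<^esub> x)"
    using assms(1) by (simp add: topological_group_def)
  from continuous_map_compose[OF assms(2) this] show ?thesis by (simp add: o_def)
qed

lemma continuous_map_group_const:
  "topological_group G T \<Longrightarrow> c \<in> carrier G \<Longrightarrow> continuous_map Z T (\<lambda>z. c)"
  by (simp add: topspace_topological_group)

lemma cont_hom_compose:
  "cont_hom G TG P TP g \<Longrightarrow> cont_hom P TP Q TQ e \<Longrightarrow> cont_hom G TG Q TQ (e \<circ> g)"
  unfolding cont_hom_def using hom_compose continuous_map_compose by blast

lemma group_hom_transfer:
  fixes P :: "'p monoid" and e :: "'p \<Rightarrow> 'q"
  assumes gP: "group P" and inj: "inj_on e (carrier P)"
  defines "d \<equiv> inv_into (carrier P) e"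
  defines "Q \<equiv> \<lparr>carrier = e ` carrier P, mult = (\<lambda>u v. e (d u \<otimes>\<^bsub>P\<^esub> d v)), one = e \<one>\<^bsub>P\<^esub>\<rparr>"
  shows "group_hom P Q e"
proof -
  interpret P: group P by (rule gP)
  have [simp]: "x \<in> carrier P \<Longrightarrow> d (e x) = x" for x
    unfolding d_def using inj by simp
  have [simp]: "u \<in> e ` carrier P \<Longrightarrow> d u \<in> carrier P" for u
    unfolding d_def by (simp add: inv_into_into)
  have [simp]: "u \<in> e ` carrier P \<Longrightarrow> e (d u) = u" for u
    unfolding d_def by (simp add: f_inv_into_f)
  have [simp]: "carrier Q = e ` carrier P" "\<And>u v. u \<otimes>\<^bsub>Q\<^esub> v = e (d u \<otimes>\<^bsub>P\<^esub> d v)"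
    "\<one>\<^bsub>Q\<^esub> = e \<one>\<^bsub>P\<^esub>" by (simp_all add: Q_def)
  have "group Q"
  proof (rule groupI)
    fix x y z assume "x \<in> carrier Q" "y \<in> carrier Q" "z \<in> carrier Q"
    then show "x \<otimes>\<^bsub>Q\<^esub> y \<otimes>\<^bsub>Q\<^esub> z = x \<otimes>\<^bsub>Q\<^esub> (y \<otimes>\<^bsub>Q\<^esub> z)"
      by (simp add: P.m_assoc)
  next
    fix x assume "x \<in> carrier Q"
    then show "\<exists>y\<in>carrier Q. y \<otimes>\<^bsub>Q\<^esub> x = \<one>\<^bsub>Q\<^esub>"
      by (intro bexI[of _ "e (inv\<^bsub>P\<^esub> d x)"]) auto
  qed auto
  moreover have "e \<in> hom P Q" by (auto simp: hom_def)
  ultimately show ?thesis by (simp add: group_hom_def group_hom_axioms_def gP)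
qed

lemma haus_topgroup_transfer:
  fixes P :: "'p monoid" and e :: "'p \<Rightarrow> 'q"
  assumes hP: "haus_topgroup P T" and inj: "inj_on e (carrier P)"
  defines "d \<equiv> inv_into (carrier P) e"
  defines "Q \<equiv> \<lparr>carrier = e ` carrier P, mult = (\<lambda>u v. e (d u \<otimes>\<^bsub>P\<^esub> d v)), one = e \<one>\<^bsub>P\<^esub>\<rparr>"
  defines "TQ \<equiv> pullback_topology (e ` carrier P) d T"
  shows "haus_topgroup Q TQ \<and> cont_hom P T Q TQ e"
proof -
  have tg: "topological_group P T" and HT: "Hausdorff_space T"
    using hP by (auto simp: haus_topgroup_def)
  then have gP: "group P" and tsP: "topspace T = carrier P"
    by (auto simp: topological_group_def)
  have de[simp]: "x \<in> carrier P \<Longrightarrow> d (e x) = x" for x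
    unfolding d_def using inj by simp
  have ed[simp]: "u \<in> e ` carrier P \<Longrightarrow> e (d u) = u" for u
    unfolding d_def by (simp add: f_inv_into_f)
  have dc[simp]: "u \<in> e ` carrier P \<Longrightarrow> d u \<in> carrier P" for u
    unfolding d_def by (simp add: inv_into_into)
  have cQ[simp]: "carrier Q = e ` carrier P" by (simp add: Q_def)
  have mQ: "u \<otimes>\<^bsub>Q\<^esub> v = e (d u \<otimes>\<^bsub>P\<^esub> d v)" for u v by (simp add: Q_def)
  interpret group_hom P Q e
    unfolding Q_def d_def by (rule group_hom_transfer[OF gP inj])
  have invQ: "inv\<^bsub>Q\<^esub> u = e (inv\<^bsub>P\<^esub> (d u))" if "u \<in> carrier Q" for u
    using hom_inv[of "d u"] that by simp
  have tsQ: "topspace TQ = e ` carrier P"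
    by (auto simp: TQ_def topspace_pullback_topology tsP)
  have cd: "continuous_map TQ T d"
    using continuous_map_pullback[OF continuous_map_id, of "e ` carrier P" d] by (simp add: TQ_def)
  have ce: "continuous_map T TQ e"
    unfolding TQ_def
  proof (rule continuous_map_pullback')
    show "continuous_map T T (d \<circ> e)"
      by (rule continuous_map_eq[OF continuous_map_id]) (simp add: tsP)
  qed (auto simp: tsP)
  have "continuous_map (prod_topology TQ TQ) TQ (\<lambda>w. e (d (fst w) \<otimes>\<^bsub>P\<^esub> d (snd w)))"
    by (intro continuous_map_compose[OF _ ce, unfolded o_def] continuous_map_group_mult[OF tg]
        continuous_map_compose[OF continuous_map_fst cd, unfolded o_def]
        continuous_map_compose[OF continuous_map_snd cd, unfolded o_def])
  then have cmQ: "continuous_map (prod_topology TQ TQ) TQ (\<lambda>(x, y). x \<otimes>\<^bsub>Q\<^esub> y)"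
    by (simp add: case_prod_beta' mQ)
  have "continuous_map TQ TQ (\<lambda>u. e (inv\<^bsub>P\<^esub> d u))"
    by (intro continuous_map_compose[OF _ ce, unfolded o_def] continuous_map_group_inv[OF tg] cd)
  then have ciQ: "continuous_map TQ TQ (\<lambda>x. inv\<^bsub>Q\<^esub> x)"
    by (rule continuous_map_eq) (simp add: tsQ invQ del: hom_inv)
  have "inj_on d (topspace TQ)"
    unfolding tsQ d_def by (rule inj_on_inv_into) simp
  then have HQ: "Hausdorff_space TQ"
    by (rule Hausdorff_space_injective_preimage[OF HT cd])
  show ?thesis
    unfolding haus_topgroup_def topological_group_def cont_hom_def
    using H.is_group tsQ cmQ ciQ HQ homh ce by simp
qed

text \<open>HOL's sym_diff is only an abbreviation; a constant is needed so that the laws of the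
  Boolean group of finite sets can be used as rewrite rules.\<close>

definition symdiff :: "'a set \<Rightarrow> 'a set \<Rightarrow> 'a set" where
  "symdiff A B = (A - B) \<union> (B - A)"

lemma symdiff_assoc: "symdiff (symdiff A B) C = symdiff A (symdiff B C)"
  by (auto simp: symdiff_def)

lemma symdiff_empty [simp]: "symdiff A {} = A" "symdiff {} A = A"
  by (auto simp: symdiff_def)

lemma symdiff_self [simp]: "symdiff A A = {}"
  by (auto simp: symdiff_def)

lemma symdiff_cancel [simp]: "symdiff A (symdiff A B) = B" "symdiff (symdiff A B) B = A"
  by (auto simp: symdiff_def)

lemma symdiff_swap: "symdiff (symdiff A B) (symdiff C D) = symdiff (symdiff A C) (symdiff B D)"
  by (auto simp: symdiff_def)

lemma symdiff_subset: "A \<subseteq> Y \<Longrightarrow> B \<subseteq> Y \<Longrightarrow> symdiff A B \<subseteq> Y"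
  by (auto simp: symdiff_def)

lemma finite_symdiff: "finite A \<Longrightarrow> finite B \<Longrightarrow> finite (symdiff A B)"
  by (auto simp: symdiff_def)

lemma image_symdiff:
  "inj_on f Y \<Longrightarrow> A \<subseteq> Y \<Longrightarrow> B \<subseteq> Y \<Longrightarrow> f ` symdiff A B = symdiff (f ` A) (f ` B)"
  unfolding symdiff_def image_Un by (metis Diff_subset inj_on_image_set_diff subset_trans)

lemma insert_eq_symdiff: "a \<notin> A \<Longrightarrow> insert a A = symdiff A {a}"
  by (auto simp: symdiff_def)

lemma even_card_symdiff_singleton:
  "finite A \<Longrightarrow> even (card (symdiff A {a})) \<longleftrightarrow> odd (card A)"
proof (cases "a \<in> A")
  case True
  moreover assume "finite A"
  moreover have "symdiff A {a} = A - {a}" using True by (auto simp: symdiff_def)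
  moreover have "card A > 0" using True \<open>finite A\<close> card_gt_0_iff by blast
  ultimately show ?thesis by (auto simp: card_Diff_singleton)
next
  case False
  moreover assume "finite A"
  moreover have "symdiff A {a} = insert a A" using False by (auto simp: symdiff_def)
  ultimately show ?thesis by simp
qed

inductive_set pair_span :: "'a set \<Rightarrow> ('a \<times> 'a) set \<Rightarrow> 'a set set" for Y R where
  empty: "{} \<in> pair_span Y R"
| step: "A \<in> pair_span Y R \<Longrightarrow> (a, b) \<in> R \<Longrightarrow> a \<in> Y \<Longrightarrow> b \<in> Y \<Longrightarrow>
    symdiff (symdiff A {a}) {b} \<in> pair_span Y R"

lemma pair_span_finite_subset: "A \<in> pair_span Y R \<Longrightarrow> A \<subseteq> Y \<and> finite A"
  by (induction rule: pair_span.induct) (auto simp: symdiff_def)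

lemma symdiff_pair_span:
  assumes "B \<in> pair_span Y R" "A \<in> pair_span Y R"
  shows "symdiff A B \<in> pair_span Y R"
  using assms
proof (induction B rule: pair_span.induct)
  case (step B a b)
  then show ?case
    using pair_span.step[OF step.IH[OF step.prems]]
    by (simp add: symdiff_assoc)
qed simp

lemma pair_span_mono: "A \<in> pair_span Y R \<Longrightarrow> R \<subseteq> R' \<Longrightarrow> A \<in> pair_span Y R'"
  by (induction rule: pair_span.induct) (auto intro: pair_span.intros)

lemma image_pair_span:
  assumes "A \<in> pair_span Y R" "inj_on f Y" "f ` Y \<subseteq> Y'"
    and "\<And>a b. (a, b) \<in> R \<Longrightarrow> (f a, f b) \<in> R'"
  shows "f ` A \<in> pair_span Y' R'"
  using assms(1)
proof (induction rule: pair_span.induct)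
  case (step A a b)
  have "A \<subseteq> Y" using pair_span_finite_subset[OF step.hyps(1)] by blast
  then have "f ` symdiff (symdiff A {a}) {b} = symdiff (symdiff (f ` A) {f a}) {f b}"
    using step.hyps assms(2) by (simp add: image_symdiff symdiff_subset)
  then show ?case using step assms(3,4) by (auto intro!: pair_span.step)
qed (simp add: pair_span.empty)

lemma symdiff_image_pair_span:
  assumes "finite A" "A \<subseteq> Y" "inj_on f Y" "f ` Y \<subseteq> Y" "\<And>y. y \<in> A \<Longrightarrow> (f y, y) \<in> R"
  shows "symdiff (f ` A) A \<in> pair_span Y R"
  using assms
proof (induction A rule: finite_induct)
  case (insert y A)
  have "f y \<notin> f ` A"
    using inj_on_image_mem_iff[OF insert.prems(2), of y A] insert.hyps(2) insert.prems(1) by simp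
  then have "f ` insert y A = symdiff (f ` A) {f y}"
    by (subst image_insert) (rule insert_eq_symdiff)
  then have "symdiff (f ` insert y A) (insert y A) = symdiff (symdiff (f ` A) {f y}) (symdiff A {y})"
    using insert_eq_symdiff[OF insert.hyps(2)] by metis
  also have "\<dots> = symdiff (symdiff (symdiff (f ` A) A) {f y}) {y}"
    by (auto simp: symdiff_def)
  also have "\<dots> \<in> pair_span Y R"
    using insert by (intro pair_span.step) auto
  finally show ?case .
qed (simp add: pair_span.empty)

lemma even_card_Int_class_pair_span:
  assumes "A \<in> pair_span Y R" "equiv Y R" "y \<in> Y"
  shows "even (card (A \<inter> R `` {y}))"
  using assms(1)
proof (induction rule: pair_span.induct)
  case (step A a b)
  let ?K = "R `` {y}"
  have fin: "finite (A \<inter> ?K)" using pair_span_finite_subset[OF step.hyps(1)] by blast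
  have ab: "a \<in> ?K \<longleftrightarrow> b \<in> ?K"
    using step.hyps(2) assms(2) unfolding equiv_def sym_def trans_def by blast
  show ?case
  proof (cases "a \<in> ?K")
    case True
    then have "symdiff (symdiff A {a}) {b} \<inter> ?K = symdiff (symdiff (A \<inter> ?K) {a}) {b}"
      using ab by (auto simp: symdiff_def)
    then show ?thesis
      using step.IH fin by (simp add: even_card_symdiff_singleton finite_symdiff)
  next
    case False
    then have "symdiff (symdiff A {a}) {b} \<inter> ?K = A \<inter> ?K"
      using ab by (auto simp: symdiff_def)
    then show ?thesis using step.IH by simp
  qed
qed simp

definition translate_cosets :: "'g monoid \<Rightarrow> 'g \<Rightarrow> 'g set set \<Rightarrow> 'g set set" where
  "translate_cosets G x A = (\<lambda>C. x <#\<^bsub>G\<^esub> C) ` A"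

definition finite_coset_sets :: "'g monoid \<Rightarrow> 'g set \<Rightarrow> 'g set set set" where
  "finite_coset_sets G H = {A. A \<subseteq> lcosets G H \<and> finite A}"

definition boolean_semidirect :: "'g monoid \<Rightarrow> 'g set \<Rightarrow> ('g set set \<times> 'g) monoid" where
  "boolean_semidirect G H = \<lparr>carrier = finite_coset_sets G H \<times> carrier G,
     mult = (\<lambda>p q. (symdiff (fst p) (translate_cosets G (snd p) (fst q)), snd p \<otimes>\<^bsub>G\<^esub> snd q)),
     one = ({}, \<one>\<^bsub>G\<^esub>)\<rparr>"

text \<open>A coboundary twist of x \<mapsto> ({}, x).\<close>

definition twisted_embedding :: "'g monoid \<Rightarrow> 'g set \<Rightarrow> 'g \<Rightarrow> 'g set set \<times> 'g" where
  "twisted_embedding G H x = (symdiff {H} (translate_cosets G x {H}), x)"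

text \<open>An injection of the semidirect product into the type of the test groups of tgr_epi:
  a finite set of cosets is recorded by a list of representatives.\<close>

definition coset_rep :: "'g set \<Rightarrow> 'g" where
  "coset_rep C = (SOME a. a \<in> C)"

definition encode_semidirect :: "'g set set \<times> 'g \<Rightarrow> 'g list" where
  "encode_semidirect p = snd p # (SOME l. set l = coset_rep ` fst p)"

definition pair_span_topology ::
    "'g monoid \<Rightarrow> 'g set \<Rightarrow> ('g set \<times> 'g set) set set \<Rightarrow> 'g set set topology" where
  "pair_span_topology G H RR = topology (\<lambda>S. S \<subseteq> finite_coset_sets G H \<and>
     (\<forall>A\<in>S. \<exists>R\<in>RR. symdiff A ` pair_span (lcosets G H) R \<subseteq> S))"

locale topgroup =
  fixes G :: "'g monoid" (structure) and T :: "'g topology"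
  assumes topgroup: "topological_group G T"

sublocale topgroup \<subseteq> group G
  using topgroup by (simp add: topological_group_def)

context topgroup
begin

lemma topspace_carrier: "topspace T = carrier G"
  using topgroup by (rule topspace_topological_group)

lemma subgroup_closure_of:
  assumes K: "subgroup K G"
  shows "subgroup (T closure_of K) G"
proof (rule subgroupI)
  have ts: "topspace T = carrier G" by (rule topspace_carrier)
  show "T closure_of K \<subseteq> carrier G" using closure_of_subset_topspace[of T K] ts by simp
  have "K \<subseteq> topspace T" using K ts subgroup.subset by blast
  then have "\<one> \<in> T closure_of K"
    using closure_of_subset subgroup.one_closed[OF K] by blast
  then show "T closure_of K \<noteq> {}" by blast
  fix a b assume a: "a \<in> T closure_of K" and b: "b \<in> T closure_of K"
  have "(\<lambda>x. inv x) ` (T closure_of K) \<subseteq> T closure_of ((\<lambda>x. inv x) ` K)"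
    using topgroup by (intro continuous_map_image_closure_subset) (simp add: topological_group_def)
  also have "\<dots> \<subseteq> T closure_of K"
    by (rule closure_of_mono) (auto intro: subgroup.m_inv_closed[OF K])
  finally show "inv a \<in> T closure_of K" using a by blast
  have "(\<lambda>(x, y). x \<otimes> y) ` (prod_topology T T closure_of (K \<times> K)) \<subseteq>
      T closure_of ((\<lambda>(x, y). x \<otimes> y) ` (K \<times> K))"
    using topgroup by (intro continuous_map_image_closure_subset) (simp add: topological_group_def)
  also have "\<dots> \<subseteq> T closure_of K"
    by (rule closure_of_mono) (auto intro: subgroup.m_closed[OF K])
  finally show "a \<otimes> b \<in> T closure_of K" using a b by (force simp: closure_of_Times)
qed

lemma closedin_l_coset:
  assumes H: "subgroup H G" "closedin T H" and a: "a \<in> carrier G"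
  shows "closedin T (a <# H)"
proof -
  have c: "continuous_map T T (\<lambda>x. inv a \<otimes> x)"
    by (intro continuous_map_group_mult[OF topgroup] continuous_map_group_const[OF topgroup])
      (simp_all add: a continuous_map_id[unfolded id_def])
  have "a <# H = {x \<in> topspace T. inv a \<otimes> x \<in> H}"
  proof safe
    fix x assume "x \<in> a <# H"
    then obtain h where h: "h \<in> H" "x = a \<otimes> h" unfolding l_coset_def by blast
    then have "h \<in> carrier G" using subgroup.subset[OF H(1)] by blast
    then show "x \<in> topspace T" "inv a \<otimes> x \<in> H"
      using h a topspace_carrier by (simp_all add: m_assoc[symmetric])
  next
    fix x assume "x \<in> topspace T" "inv a \<otimes> x \<in> H"
    then show "x \<in> a <# H"
      using subgroup.lcos_module_rev[OF H(1) is_group a] topspace_carrier by simp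
  qed
  then show ?thesis using closedin_continuous_map_preimage[OF c H(2)] by simp
qed

lemma mem_own_l_coset: "subgroup H G \<Longrightarrow> x \<in> carrier G \<Longrightarrow> x \<in> x <# H"
  using subgroup.one_closed r_one unfolding l_coset_def by force

lemma lcosets_subset_carrier: "H \<subseteq> carrier G \<Longrightarrow> C \<in> lcosets G H \<Longrightarrow> C \<subseteq> carrier G"
  using l_coset_subset_G by (auto simp: lcosets_def)

lemma l_coset_in_lcosets:
  "H \<subseteq> carrier G \<Longrightarrow> C \<in> lcosets G H \<Longrightarrow> x \<in> carrier G \<Longrightarrow> x <# C \<in> lcosets G H"
  by (auto simp: lcosets_def lcos_m_assoc)

end

text \<open>Hypotheses (1) and (3) of the theorem are used only through this interface.\<close>

locale coset_equiv_family = topgroup G TG for G :: "'g monoid" (structure) and TG +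
  fixes H :: "'g set" and RR :: "('g set \<times> 'g set) set set"
  assumes Hausdorff: "Hausdorff_space TG"
    and subgroup_H: "subgroup H G"
    and family_nonempty: "RR \<noteq> {}"
    and family_equiv: "R \<in> RR \<Longrightarrow> equiv (lcosets G H) R"
    and family_directed: "R1 \<in> RR \<Longrightarrow> R2 \<in> RR \<Longrightarrow> \<exists>R3\<in>RR. R3 \<subseteq> R1 \<inter> R2"
    and family_separating:
      "y \<in> lcosets G H \<Longrightarrow> z \<in> lcosets G H \<Longrightarrow> y \<noteq> z \<Longrightarrow> \<exists>R\<in>RR. (y, z) \<notin> R"
    and family_translation: "x \<in> carrier G \<Longrightarrow> R \<in> RR \<Longrightarrow>
      \<exists>R'\<in>RR. \<forall>y z. (y, z) \<in> R' \<longrightarrow> (x <# y, x <# z) \<in> R"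
    and family_stabilizer: "y \<in> lcosets G H \<Longrightarrow> R \<in> RR \<Longrightarrow>
      \<exists>W. openin TG W \<and> \<one> \<in> W \<and> (\<forall>u\<in>W. (u <# y, y) \<in> R)"
    and family_equicontinuous: "R \<in> RR \<Longrightarrow> \<exists>W R'. openin TG W \<and> \<one> \<in> W \<and> R' \<in> RR \<and>
      (\<forall>u\<in>W. \<forall>y z. (y, z) \<in> R' \<longrightarrow> (u <# y, u <# z) \<in> R)"
begin

abbreviation "Y \<equiv> lcosets G H"
abbreviation "B \<equiv> finite_coset_sets G H"
abbreviation "N R \<equiv> pair_span Y R"
abbreviation "T \<equiv> pair_span_topology G H RR"

lemma continuous_map_into_carrier: "continuous_map Z TG a \<Longrightarrow> z \<in> topspace Z \<Longrightarrow> a z \<in> carrier G"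
  using continuous_map_image_subset_topspace[of Z TG a] topspace_carrier by blast

lemma H_subset: "H \<subseteq> carrier G"
  using subgroup_H by (rule subgroup.subset)

lemma lcosets_iff: "C \<in> Y \<longleftrightarrow> (\<exists>a\<in>carrier G. C = a <# H)"
  by (auto simp: lcosets_def)

lemma lcosets_subset: "C \<in> Y \<Longrightarrow> C \<subseteq> carrier G"
  using H_subset by (rule lcosets_subset_carrier)

lemma l_coset_lcosets: "C \<in> Y \<Longrightarrow> x \<in> carrier G \<Longrightarrow> x <# C \<in> Y"
  using H_subset by (rule l_coset_in_lcosets)

lemma H_lcosets: "H \<in> Y"
  using H_subset lcos_mult_one by (auto simp: lcosets_iff)

lemma l_coset_l_coset: "C \<in> Y \<Longrightarrow> x \<in> carrier G \<Longrightarrow> y \<in> carrier G \<Longrightarrow> x <# (y <# C) = (x \<otimes> y) <# C"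
  using lcosets_subset lcos_m_assoc by blast

lemma inj_on_l_coset: "x \<in> carrier G \<Longrightarrow> inj_on (\<lambda>C. x <# C) Y"
proof (rule inj_onI)
  fix C D assume x: "x \<in> carrier G" and CD: "C \<in> Y" "D \<in> Y" "x <# C = x <# D"
  have "C = inv x <# (x <# C)"
    using l_coset_l_coset[of C "inv x" x] lcos_mult_one[OF lcosets_subset[OF CD(1)]] x CD(1) by simp
  moreover have "D = inv x <# (x <# D)"
    using l_coset_l_coset[of D "inv x" x] lcos_mult_one[OF lcosets_subset[OF CD(2)]] x CD(2) by simp
  ultimately show "C = D" using CD(3) by simp
qed

lemma translate_cosets_subset: "A \<subseteq> Y \<Longrightarrow> x \<in> carrier G \<Longrightarrow> translate_cosets G x A \<subseteq> Y"
  by (auto simp: translate_cosets_def l_coset_lcosets)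

lemma translate_cosets_finite_coset_sets:
  "A \<in> B \<Longrightarrow> x \<in> carrier G \<Longrightarrow> translate_cosets G x A \<in> B"
  by (auto simp: finite_coset_sets_def translate_cosets_def l_coset_lcosets)

lemma translate_cosets_symdiff: "A \<subseteq> Y \<Longrightarrow> A' \<subseteq> Y \<Longrightarrow> x \<in> carrier G \<Longrightarrow>
    translate_cosets G x (symdiff A A') = symdiff (translate_cosets G x A) (translate_cosets G x A')"
  unfolding translate_cosets_def by (rule image_symdiff[OF inj_on_l_coset])

lemma translate_cosets_mult: "A \<subseteq> Y \<Longrightarrow> x \<in> carrier G \<Longrightarrow> y \<in> carrier G \<Longrightarrow>
    translate_cosets G x (translate_cosets G y A) = translate_cosets G (x \<otimes> y) A"
  unfolding translate_cosets_def image_image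
  by (rule image_cong[OF refl]) (simp add: l_coset_l_coset subset_iff)

lemma translate_cosets_one: "A \<subseteq> Y \<Longrightarrow> translate_cosets G \<one> A = A"
proof -
  assume "A \<subseteq> Y"
  then have "translate_cosets G \<one> A = id ` A"
    unfolding translate_cosets_def using lcosets_subset lcos_mult_one by (intro image_cong) auto
  then show ?thesis by simp
qed

lemma translate_cosets_pair_span: "A \<in> N R \<Longrightarrow> x \<in> carrier G \<Longrightarrow>
    (\<And>a b. (a, b) \<in> R \<Longrightarrow> (x <# a, x <# b) \<in> R') \<Longrightarrow> translate_cosets G x A \<in> N R'"
  unfolding translate_cosets_def
  by (rule image_pair_span[OF _ inj_on_l_coset]) (auto simp: l_coset_lcosets)

lemma symdiff_finite_coset_sets: "A \<in> B \<Longrightarrow> A' \<in> B \<Longrightarrow> symdiff A A' \<in> B"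
  by (auto simp: finite_coset_sets_def symdiff_subset finite_symdiff)

lemma pair_span_finite_coset_sets: "A \<in> N R \<Longrightarrow> A \<in> B"
  using pair_span_finite_subset by (auto simp: finite_coset_sets_def)

lemma istopology_pair_span:
  "istopology (\<lambda>S. S \<subseteq> B \<and> (\<forall>A\<in>S. \<exists>R\<in>RR. symdiff A ` N R \<subseteq> S))"
  unfolding istopology_def
proof (rule conjI; intro allI impI)
  fix S U assume S: "S \<subseteq> B \<and> (\<forall>A\<in>S. \<exists>R\<in>RR. symdiff A ` N R \<subseteq> S)"
    and U: "U \<subseteq> B \<and> (\<forall>A\<in>U. \<exists>R\<in>RR. symdiff A ` N R \<subseteq> U)"
  show "S \<inter> U \<subseteq> B \<and> (\<forall>A\<in>S \<inter> U. \<exists>R\<in>RR. symdiff A ` N R \<subseteq> S \<inter> U)"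
  proof (intro conjI ballI)
    show "S \<inter> U \<subseteq> B" using S by blast
    fix A assume A: "A \<in> S \<inter> U"
    obtain R1 where R1: "R1 \<in> RR" "symdiff A ` N R1 \<subseteq> S" using S A by auto
    obtain R2 where R2: "R2 \<in> RR" "symdiff A ` N R2 \<subseteq> U" using U A by auto
    obtain R3 where R3: "R3 \<in> RR" "R3 \<subseteq> R1 \<inter> R2" using family_directed[OF R1(1) R2(1)] by blast
    then have "N R3 \<subseteq> N R1" "N R3 \<subseteq> N R2" by (auto intro: pair_span_mono)
    then show "\<exists>R\<in>RR. symdiff A ` N R \<subseteq> S \<inter> U" using R1(2) R2(2) R3(1) by blast
  qed
next
  fix K assume "\<forall>S\<in>K. S \<subseteq> B \<and> (\<forall>A\<in>S. \<exists>R\<in>RR. symdiff A ` N R \<subseteq> S)"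
  then show "\<Union>K \<subseteq> B \<and> (\<forall>A\<in>\<Union>K. \<exists>R\<in>RR. symdiff A ` N R \<subseteq> \<Union>K)"
    by (metis Sup_le_iff Union_iff Union_upper subset_trans)
qed

lemma openin_T: "openin T S \<longleftrightarrow> S \<subseteq> B \<and> (\<forall>A\<in>S. \<exists>R\<in>RR. symdiff A ` N R \<subseteq> S)"
  unfolding pair_span_topology_def using istopology_pair_span by simp

lemma mem_symdiff_pair_span: "A \<in> symdiff A ` N R"
  using pair_span.empty by (metis image_eqI symdiff_empty(1))

lemma openin_symdiff_pair_span:
  assumes "A \<in> B" "R \<in> RR"
  shows "openin T (symdiff A ` N R)"
  unfolding openin_T
proof
  show "symdiff A ` N R \<subseteq> B"
    using assms symdiff_finite_coset_sets pair_span_finite_coset_sets by blast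
  show "\<forall>A'\<in>symdiff A ` N R. \<exists>R'\<in>RR. symdiff A' ` N R' \<subseteq> symdiff A ` N R"
  proof
    fix A' assume "A' \<in> symdiff A ` N R"
    then obtain n where n: "n \<in> N R" "A' = symdiff A n" by blast
    have "symdiff A' m = symdiff A (symdiff n m)" for m
      using n(2) by (simp add: symdiff_assoc)
    then have "symdiff A' ` N R \<subseteq> symdiff A ` N R"
      using n(1) symdiff_pair_span by fastforce
    then show "\<exists>R'\<in>RR. symdiff A' ` N R' \<subseteq> symdiff A ` N R" using assms(2) by blast
  qed
qed

lemma topspace_T: "topspace T = B"
proof
  show "topspace T \<subseteq> B" unfolding topspace_def using openin_T by auto
  show "B \<subseteq> topspace T"
  proof
    fix A assume A: "A \<in> B"
    obtain R where "R \<in> RR" using family_nonempty by blast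
    then have "openin T (symdiff A ` N R)" by (rule openin_symdiff_pair_span[OF A])
    then show "A \<in> topspace T" by (rule subsetD[OF openin_subset mem_symdiff_pair_span])
  qed
qed

lemma continuous_map_into_B: "continuous_map Z T a \<Longrightarrow> z \<in> topspace Z \<Longrightarrow> a z \<in> B"
  using continuous_map_image_subset_topspace[of Z T a] topspace_T by blast

lemma continuous_map_T_iff:
  "continuous_map X T f \<longleftrightarrow> f \<in> topspace X \<rightarrow> B \<and>
    (\<forall>x\<in>topspace X. \<forall>R\<in>RR. \<exists>U. openin X U \<and> x \<in> U \<and> (\<forall>y\<in>U. symdiff (f x) (f y) \<in> N R))"
proof (intro iffI conjI ballI)
  assume c: "continuous_map X T f"
  show "f \<in> topspace X \<rightarrow> B" using continuous_map_into_B[OF c] by blast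
  fix x R assume x: "x \<in> topspace X" and R: "R \<in> RR"
  let ?U = "{y \<in> topspace X. f y \<in> symdiff (f x) ` N R}"
  have "openin X ?U"
    by (rule openin_continuous_map_preimage[OF c openin_symdiff_pair_span[OF continuous_map_into_B[OF c x] R]])
  moreover have "x \<in> ?U" using x mem_symdiff_pair_span[of "f x" R] by blast
  moreover have "\<forall>y\<in>?U. symdiff (f x) (f y) \<in> N R" by auto
  ultimately show "\<exists>U. openin X U \<and> x \<in> U \<and> (\<forall>y\<in>U. symdiff (f x) (f y) \<in> N R)"
    by blast
next
  assume f: "f \<in> topspace X \<rightarrow> B \<and>
    (\<forall>x\<in>topspace X. \<forall>R\<in>RR. \<exists>U. openin X U \<and> x \<in> U \<and> (\<forall>y\<in>U. symdiff (f x) (f y) \<in> N R))"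
  show "continuous_map X T f"
    unfolding continuous_map_eq_topcontinuous_at topcontinuous_at_def
  proof (intro ballI conjI allI impI)
    show "f \<in> topspace X \<rightarrow> topspace T" using f topspace_T by simp
    fix x V assume x: "x \<in> topspace X" and V: "openin T V \<and> f x \<in> V"
    then obtain R where R: "R \<in> RR" "symdiff (f x) ` N R \<subseteq> V" using openin_T by blast
    obtain U where U: "openin X U" "x \<in> U" "\<forall>y\<in>U. symdiff (f x) (f y) \<in> N R"
      using f x R(1) by blast
    have "f y \<in> V" if "y \<in> U" for y
    proof -
      have "f y \<in> symdiff (f x) ` N R"
        using U(3) that symdiff_cancel(1)[of "f x" "f y"] by (metis image_eqI)
      then show ?thesis using R(2) by blast
    qed
    then show "\<exists>U. openin X U \<and> x \<in> U \<and> (\<forall>y\<in>U. f y \<in> V)" using U by blast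
  qed
qed

lemma continuous_map_symdiff:
  assumes "continuous_map Z T a" "continuous_map Z T b"
  shows "continuous_map Z T (\<lambda>z. symdiff (a z) (b z))"
  unfolding continuous_map_T_iff
proof (intro conjI ballI)
  show "(\<lambda>z. symdiff (a z) (b z)) \<in> topspace Z \<rightarrow> B"
    using continuous_map_into_B[OF assms(1)] continuous_map_into_B[OF assms(2)]
      symdiff_finite_coset_sets by blast
  fix z R assume z: "z \<in> topspace Z" and R: "R \<in> RR"
  obtain U1 where U1: "openin Z U1" "z \<in> U1" "\<forall>y\<in>U1. symdiff (a z) (a y) \<in> N R"
    using assms(1) z R unfolding continuous_map_T_iff by blast
  obtain U2 where U2: "openin Z U2" "z \<in> U2" "\<forall>y\<in>U2. symdiff (b z) (b y) \<in> N R"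
    using assms(2) z R unfolding continuous_map_T_iff by blast
  have "symdiff (symdiff (a z) (b z)) (symdiff (a y) (b y)) \<in> N R" if "y \<in> U1 \<inter> U2" for y
  proof -
    have "symdiff (symdiff (a z) (a y)) (symdiff (b z) (b y)) \<in> N R"
      using symdiff_pair_span that U1(3) U2(3) by blast
    then show ?thesis by (simp only: symdiff_swap)
  qed
  then show "\<exists>U. openin Z U \<and> z \<in> U \<and>
      (\<forall>y\<in>U. symdiff (symdiff (a z) (b z)) (symdiff (a y) (b y)) \<in> N R)"
    using U1(1,2) U2(1,2) openin_Int[OF U1(1) U2(1)] by blast
qed

text \<open>Each coset in A0 needs its own neighbourhood of the identity from family_stabilizer;
  this is where finiteness of A0 is used.\<close>

lemma translate_cosets_nearby:
  assumes x0: "x0 \<in> carrier G" and A0: "A0 \<in> B" and R: "R \<in> RR"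
  obtains W R' where "openin TG W" "\<one> \<in> W" "R' \<in> RR"
    "\<And>u n. u \<in> W \<Longrightarrow> n \<in> N R' \<Longrightarrow>
       symdiff (translate_cosets G x0 A0) (translate_cosets G (x0 \<otimes> u) (symdiff A0 n)) \<in> N R"
proof -
  have A0Y: "A0 \<subseteq> Y" and A0f: "finite A0" using A0 by (auto simp: finite_coset_sets_def)
  obtain R1 where R1: "R1 \<in> RR" "\<And>y z. (y, z) \<in> R1 \<Longrightarrow> (x0 <# y, x0 <# z) \<in> R"
    using family_translation[OF x0 R] by blast
  obtain W1 R2 where W1: "openin TG W1" "\<one> \<in> W1" "R2 \<in> RR"
      "\<And>u y z. u \<in> W1 \<Longrightarrow> (y, z) \<in> R2 \<Longrightarrow> (u <# y, u <# z) \<in> R1"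
    using family_equicontinuous[OF R1(1)] by blast
  obtain Wf where Wf: "\<And>y. y \<in> A0 \<Longrightarrow> openin TG (Wf y) \<and> \<one> \<in> Wf y \<and> (\<forall>u\<in>Wf y. (u <# y, y) \<in> R1)"
    using family_stabilizer[OF _ R1(1)] A0Y by (metis subsetD)
  define W where "W = W1 \<inter> \<Inter>(Wf ` A0)"
  show thesis
  proof
    show "openin TG W" unfolding W_def
      by (rule openin_Int_Inter) (use W1 Wf A0f in auto)
    show "\<one> \<in> W" unfolding W_def using W1 Wf by blast
    show "R2 \<in> RR" by fact
    fix u n assume u: "u \<in> W" and n: "n \<in> N R2"
    have uG: "u \<in> carrier G" using u openin_subset[OF W1(1)] topspace_carrier by (auto simp: W_def)
    have nY: "n \<subseteq> Y" using pair_span_finite_subset[OF n] by blast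
    have "translate_cosets G u n \<in> N R1"
      by (rule translate_cosets_pair_span[OF n uG]) (use W1(4) u W_def in blast)
    moreover have "symdiff (translate_cosets G u A0) A0 \<in> N R1"
      unfolding translate_cosets_def
    proof (rule symdiff_image_pair_span[OF A0f A0Y inj_on_l_coset[OF uG]])
      show "(\<lambda>C. u <# C) ` Y \<subseteq> Y" using l_coset_lcosets uG by blast
      show "\<And>y. y \<in> A0 \<Longrightarrow> (u <# y, y) \<in> R1" using Wf u W_def by blast
    qed
    ultimately have "symdiff (symdiff (translate_cosets G u A0) A0) (translate_cosets G u n) \<in> N R1"
      by (rule symdiff_pair_span)
    moreover have "symdiff (symdiff (translate_cosets G u A0) A0) (translate_cosets G u n) =
        symdiff A0 (translate_cosets G u (symdiff A0 n))"
      using translate_cosets_symdiff[OF A0Y nY uG] by (auto simp: symdiff_def)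
    ultimately have "symdiff A0 (translate_cosets G u (symdiff A0 n)) \<in> N R1" by simp
    then have "translate_cosets G x0 (symdiff A0 (translate_cosets G u (symdiff A0 n))) \<in> N R"
      by (rule translate_cosets_pair_span[OF _ x0 R1(2)])
    moreover have A0nY: "symdiff A0 n \<subseteq> Y" using A0Y nY by (rule symdiff_subset)
    moreover have "translate_cosets G x0 (symdiff A0 (translate_cosets G u (symdiff A0 n))) =
        symdiff (translate_cosets G x0 A0) (translate_cosets G (x0 \<otimes> u) (symdiff A0 n))"
      using translate_cosets_symdiff[OF A0Y translate_cosets_subset[OF A0nY uG] x0]
        translate_cosets_mult[OF A0nY x0 uG] by simp
    ultimately show "symdiff (translate_cosets G x0 A0) (translate_cosets G (x0 \<otimes> u) (symdiff A0 n)) \<in> N R"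
      by simp
  qed
qed

lemma continuous_map_translate_cosets:
  assumes a: "continuous_map Z TG a" and b: "continuous_map Z T b"
  shows "continuous_map Z T (\<lambda>z. translate_cosets G (a z) (b z))"
  unfolding continuous_map_T_iff
proof (intro conjI ballI)
  show "(\<lambda>z. translate_cosets G (a z) (b z)) \<in> topspace Z \<rightarrow> B"
    using continuous_map_into_carrier[OF a] continuous_map_into_B[OF b]
      translate_cosets_finite_coset_sets by blast
  fix z0 R assume z0: "z0 \<in> topspace Z" and R: "R \<in> RR"
  let ?x0 = "a z0" and ?A0 = "b z0"
  have x0: "?x0 \<in> carrier G" using continuous_map_into_carrier[OF a z0] .
  obtain W R' where W: "openin TG W" "\<one> \<in> W" "R' \<in> RR" and near:
    "\<And>u n. u \<in> W \<Longrightarrow> n \<in> N R' \<Longrightarrow>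
       symdiff (translate_cosets G ?x0 ?A0) (translate_cosets G (?x0 \<otimes> u) (symdiff ?A0 n)) \<in> N R"
    using translate_cosets_nearby[OF x0 continuous_map_into_B[OF b z0] R] by blast
  have "continuous_map Z TG (\<lambda>z. inv ?x0 \<otimes> a z)"
    by (intro continuous_map_group_mult[OF topgroup]
        continuous_map_group_const[OF topgroup] a)
      (simp add: x0)
  then have "openin Z {z \<in> topspace Z. inv ?x0 \<otimes> a z \<in> W}" (is "openin Z ?Ua")
    using W(1) by (rule openin_continuous_map_preimage)
  moreover obtain Ub where Ub: "openin Z Ub" "z0 \<in> Ub" "\<forall>z\<in>Ub. symdiff ?A0 (b z) \<in> N R'"
    using b z0 W(3) unfolding continuous_map_T_iff by blast
  moreover have "z0 \<in> ?Ua" using z0 W(2) x0 by simp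
  moreover have "symdiff (translate_cosets G ?x0 ?A0) (translate_cosets G (a z) (b z)) \<in> N R"
    if "z \<in> ?Ua \<inter> Ub" for z
  proof -
    have "a z \<in> carrier G" using continuous_map_into_carrier[OF a] that by blast
    then have "?x0 \<otimes> (inv ?x0 \<otimes> a z) = a z" using x0 by (simp add: m_assoc[symmetric])
    then show ?thesis using near[of "inv ?x0 \<otimes> a z" "symdiff ?A0 (b z)"] that Ub(3) by simp
  qed
  ultimately show "\<exists>U. openin Z U \<and> z0 \<in> U \<and>
      (\<forall>y\<in>U. symdiff (translate_cosets G ?x0 ?A0) (translate_cosets G (a y) (b y)) \<in> N R)"
    by (metis (no_types, lifting) IntI openin_Int)
qed

lemma separate_from_finite:
  assumes "finite F" "F \<subseteq> Y" "y \<in> Y" "y \<notin> F"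
  shows "\<exists>R\<in>RR. \<forall>z\<in>F. (y, z) \<notin> R"
  using assms
proof (induction F rule: finite_induct)
  case empty
  then show ?case using family_nonempty by blast
next
  case (insert z F)
  then obtain R1 where R1: "R1 \<in> RR" "\<forall>z\<in>F. (y, z) \<notin> R1" by auto
  have "y \<noteq> z" "z \<in> Y" using insert.prems by auto
  then obtain R2 where R2: "R2 \<in> RR" "(y, z) \<notin> R2"
    using family_separating[of y z] insert.prems(2) by blast
  obtain R3 where "R3 \<in> RR" "R3 \<subseteq> R1 \<inter> R2" using family_directed[OF R1(1) R2(1)] by blast
  then show ?case using R1 R2 by blast
qed

lemma nonempty_notin_pair_span:
  assumes D: "D \<in> B" "D \<noteq> {}"
  obtains R where "R \<in> RR" "D \<notin> N R"
proof -
  obtain y where y: "y \<in> D" using D(2) by blast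
  have DY: "D \<subseteq> Y" "finite D" using D(1) by (auto simp: finite_coset_sets_def)
  then obtain R where R: "R \<in> RR" "\<forall>z\<in>D - {y}. (y, z) \<notin> R"
    using separate_from_finite[of "D - {y}" y] y by blast
  have "(y, y) \<in> R" using family_equiv[OF R(1)] y DY unfolding equiv_def refl_on_def by blast
  then have "D \<inter> R `` {y} = {y}" using R(2) y by blast
  then have "D \<notin> N R"
    using even_card_Int_class_pair_span[OF _ family_equiv[OF R(1)]] y DY by force
  then show thesis using R(1) that by blast
qed

lemma Hausdorff_T: "Hausdorff_space T"
  unfolding Hausdorff_space_def topspace_T
proof (intro allI impI)
  fix A A' assume "A \<in> B \<and> A' \<in> B \<and> A \<noteq> A'"
  then have A: "A \<in> B" and A': "A' \<in> B" and "A \<noteq> A'" by auto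
  then have "symdiff A A' \<in> B" "symdiff A A' \<noteq> {}"
    by (simp add: symdiff_finite_coset_sets, auto simp: symdiff_def)
  then obtain R where R: "R \<in> RR" "symdiff A A' \<notin> N R" by (rule nonempty_notin_pair_span)
  have "disjnt (symdiff A ` N R) (symdiff A' ` N R)"
    unfolding disjnt_iff
  proof (intro allI notI)
    fix C assume "C \<in> symdiff A ` N R \<and> C \<in> symdiff A' ` N R"
    then obtain n1 n2 where n: "n1 \<in> N R" "n2 \<in> N R" and eq: "symdiff A n1 = symdiff A' n2"
      by auto
    have "symdiff n1 n2 = symdiff A (symdiff (symdiff A n1) n2)"
      by (simp add: symdiff_assoc)
    also have "\<dots> = symdiff A A'" by (simp add: eq)
    finally show False using R(2) symdiff_pair_span[OF n(2,1)] by simp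
  qed
  with openin_symdiff_pair_span[OF A R(1)] openin_symdiff_pair_span[OF A' R(1)]
  show "\<exists>U V. openin T U \<and> openin T V \<and> A \<in> U \<and> A' \<in> V \<and> disjnt U V"
    using mem_symdiff_pair_span[of A R] mem_symdiff_pair_span[of A' R] by blast
qed

abbreviation "P \<equiv> boolean_semidirect G H"
abbreviation "TP \<equiv> prod_topology T TG"

lemma carrier_P: "carrier P = B \<times> carrier G"
  by (simp add: boolean_semidirect_def)

lemma mult_P: "p \<otimes>\<^bsub>P\<^esub> q = (symdiff (fst p) (translate_cosets G (snd p) (fst q)), snd p \<otimes> snd q)"
  by (simp add: boolean_semidirect_def)

lemma one_P: "\<one>\<^bsub>P\<^esub> = ({}, \<one>)"
  by (simp add: boolean_semidirect_def)

lemma finite_coset_sets_subset: "A \<in> B \<Longrightarrow> A \<subseteq> Y"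
  by (simp add: finite_coset_sets_def)

lemma group_P: "group P"
proof (rule groupI)
  fix p q assume "p \<in> carrier P" "q \<in> carrier P"
  then show "p \<otimes>\<^bsub>P\<^esub> q \<in> carrier P"
    by (auto simp: carrier_P mult_P intro!: symdiff_finite_coset_sets translate_cosets_finite_coset_sets)
next
  show "\<one>\<^bsub>P\<^esub> \<in> carrier P" by (simp add: carrier_P one_P finite_coset_sets_def)
next
  fix p q r assume "p \<in> carrier P" "q \<in> carrier P" "r \<in> carrier P"
  then obtain A x A' y A'' z where p: "p = (A, x)" "x \<in> carrier G"
    and q: "q = (A', y)" "A' \<in> B" "y \<in> carrier G" and r: "r = (A'', z)" "A'' \<in> B" "z \<in> carrier G"
    by (auto simp: carrier_P)
  have "translate_cosets G x (symdiff A' (translate_cosets G y A'')) =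
      symdiff (translate_cosets G x A') (translate_cosets G (x \<otimes> y) A'')"
    using translate_cosets_symdiff[OF finite_coset_sets_subset[OF q(2)]
        translate_cosets_subset[OF finite_coset_sets_subset[OF r(2)] q(3)] p(2)]
      translate_cosets_mult[OF finite_coset_sets_subset[OF r(2)] p(2) q(3)] by simp
  then show "p \<otimes>\<^bsub>P\<^esub> q \<otimes>\<^bsub>P\<^esub> r = p \<otimes>\<^bsub>P\<^esub> (q \<otimes>\<^bsub>P\<^esub> r)"
    using p q r by (simp add: mult_P symdiff_assoc m_assoc)
next
  fix p assume "p \<in> carrier P"
  then obtain A x where p: "p = (A, x)" "A \<in> B" "x \<in> carrier G" by (auto simp: carrier_P)
  show "\<one>\<^bsub>P\<^esub> \<otimes>\<^bsub>P\<^esub> p = p"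
    using p by (simp add: mult_P one_P translate_cosets_one finite_coset_sets_subset)
  have "(translate_cosets G (inv x) A, inv x) \<otimes>\<^bsub>P\<^esub> p = \<one>\<^bsub>P\<^esub>"
    using p by (simp add: mult_P one_P)
  moreover have "(translate_cosets G (inv x) A, inv x) \<in> carrier P"
    using p by (simp add: carrier_P translate_cosets_finite_coset_sets)
  ultimately show "\<exists>q\<in>carrier P. q \<otimes>\<^bsub>P\<^esub> p = \<one>\<^bsub>P\<^esub>" by blast
qed

lemma inv_P:
  assumes "A \<in> B" "x \<in> carrier G"
  shows "inv\<^bsub>P\<^esub> (A, x) = (translate_cosets G (inv x) A, inv x)"
proof -
  interpret P: group P by (rule group_P)
  show ?thesis
    by (rule P.inv_equality)
      (use assms in \<open>simp_all add: mult_P one_P carrier_P translate_cosets_finite_coset_sets\<close>)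
qed

lemma topspace_TP: "topspace TP = carrier P"
  by (simp add: topspace_T topspace_carrier carrier_P)

lemma continuous_map_components:
  assumes "continuous_map Z TP p"
  shows "continuous_map Z T (\<lambda>z. fst (p z))" "continuous_map Z TG (\<lambda>z. snd (p z))"
  using assms by (simp_all add: continuous_map_pairwise o_def)

lemma continuous_map_mult_P:
  assumes "continuous_map Z TP p" "continuous_map Z TP q"
  shows "continuous_map Z TP (\<lambda>z. p z \<otimes>\<^bsub>P\<^esub> q z)"
  unfolding mult_P
  by (intro continuous_map_pairedI continuous_map_symdiff continuous_map_translate_cosets
      continuous_map_group_mult[OF topgroup] continuous_map_components assms)

lemma continuous_map_inv_P:
  assumes "continuous_map Z TP p"
  shows "continuous_map Z TP (\<lambda>z. inv\<^bsub>P\<^esub> (p z))"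
proof -
  have "continuous_map Z TP (\<lambda>z. (translate_cosets G (inv (snd (p z))) (fst (p z)), inv (snd (p z))))"
    by (intro continuous_map_pairedI continuous_map_translate_cosets
        continuous_map_group_inv[OF topgroup] continuous_map_components assms)
  then show ?thesis
  proof (rule continuous_map_eq)
    fix z assume "z \<in> topspace Z"
    then have "p z \<in> carrier P"
      using continuous_map_image_subset_topspace[OF assms] topspace_TP by blast
    then show "(translate_cosets G (inv (snd (p z))) (fst (p z)), inv (snd (p z))) = inv\<^bsub>P\<^esub> (p z)"
      by (cases "p z") (simp add: inv_P carrier_P)
  qed
qed

lemma haus_topgroup_P: "haus_topgroup P TP"
  unfolding haus_topgroup_def topological_group_def
proof (intro conjI)
  show "group P" by (rule group_P)
  show "topspace TP = carrier P" by (rule topspace_TP)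
  have "continuous_map (prod_topology TP TP) TP (\<lambda>w. fst w \<otimes>\<^bsub>P\<^esub> snd w)"
    by (intro continuous_map_mult_P continuous_map_fst continuous_map_snd)
  then show "continuous_map (prod_topology TP TP) TP (\<lambda>(x, y). x \<otimes>\<^bsub>P\<^esub> y)"
    by (simp add: case_prod_beta')
  show "continuous_map TP TP (\<lambda>x. inv\<^bsub>P\<^esub> x)"
    using continuous_map_inv_P[OF continuous_map_id] by (simp add: id_def)
  show "Hausdorff_space TP"
    using Hausdorff_T Hausdorff by (simp add: Hausdorff_space_prod_topology)
qed

lemma cont_hom_trivial_embedding: "cont_hom G TG P TP (\<lambda>x. ({}, x))"
  unfolding cont_hom_def
proof
  show "(\<lambda>x. ({}, x)) \<in> hom G P"
    by (rule homI) (auto simp: carrier_P mult_P finite_coset_sets_def translate_cosets_def)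
  show "continuous_map TG TP (\<lambda>x. ({}, x))"
    by (intro continuous_map_pairedI continuous_map_id[unfolded id_def])
      (simp add: topspace_T finite_coset_sets_def)
qed

lemma cont_hom_twisted_embedding: "cont_hom G TG P TP (twisted_embedding G H)"
  unfolding cont_hom_def
proof
  have HB: "{H} \<in> B" using H_lcosets by (simp add: finite_coset_sets_def)
  have HY: "{H} \<subseteq> Y" using H_lcosets by simp
  show "twisted_embedding G H \<in> hom G P"
  proof (rule homI)
    fix x assume "x \<in> carrier G"
    then show "twisted_embedding G H x \<in> carrier P"
      using HB by (simp add: twisted_embedding_def carrier_P symdiff_finite_coset_sets
          translate_cosets_finite_coset_sets)
  next
    fix x y assume x: "x \<in> carrier G" and y: "y \<in> carrier G"
    have "translate_cosets G x (symdiff {H} (translate_cosets G y {H})) =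
        symdiff (translate_cosets G x {H}) (translate_cosets G (x \<otimes> y) {H})"
      using translate_cosets_symdiff[OF HY translate_cosets_subset[OF HY y] x]
        translate_cosets_mult[OF HY x y] by simp
    then show "twisted_embedding G H (x \<otimes> y) = twisted_embedding G H x \<otimes>\<^bsub>P\<^esub> twisted_embedding G H y"
      by (simp add: twisted_embedding_def mult_P symdiff_assoc)
  qed
  have "continuous_map TG TP (\<lambda>x. (symdiff {H} (translate_cosets G x {H}), x))"
    by (intro continuous_map_pairedI continuous_map_symdiff continuous_map_translate_cosets
        continuous_map_id[unfolded id_def]) (simp_all add: topspace_T HB)
  then show "continuous_map TG TP (twisted_embedding G H)"
    by (simp add: twisted_embedding_def[abs_def])
qed

lemma twisted_embedding_eq_iff:
  assumes x: "x \<in> carrier G"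
  shows "twisted_embedding G H x = ({}, x) \<longleftrightarrow> x \<in> H"
proof -
  have "twisted_embedding G H x = ({}, x) \<longleftrightarrow> x <# H = H"
    by (auto simp: twisted_embedding_def translate_cosets_def symdiff_def)
  also have "\<dots> \<longleftrightarrow> x \<in> H"
    using mem_own_l_coset[OF subgroup_H x] coset_join3[OF x subgroup_H] by auto
  finally show ?thesis .
qed

lemma coset_rep_in: "C \<in> Y \<Longrightarrow> coset_rep C \<in> C"
  unfolding coset_rep_def lcosets_iff using mem_own_l_coset[OF subgroup_H] by (metis someI)

lemma inj_on_coset_rep: "inj_on coset_rep Y"
proof (rule inj_onI)
  fix C D assume C: "C \<in> Y" and D: "D \<in> Y" and eq: "coset_rep C = coset_rep D"
  have "C = coset_rep C <# H" if C: "C \<in> Y" for C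
  proof -
    obtain a where "a \<in> carrier G" "C = a <# H" using C by (auto simp: lcosets_iff)
    then show ?thesis using l_repr_independence[OF _ _ subgroup_H] coset_rep_in[OF C] by blast
  qed
  then show "C = D" using C D eq by metis
qed

lemma inj_on_encode_semidirect: "inj_on encode_semidirect (carrier P)"
proof (rule inj_onI)
  fix p q assume p: "p \<in> carrier P" and q: "q \<in> carrier P"
    and eq: "encode_semidirect p = encode_semidirect q"
  have fin: "finite (coset_rep ` fst p)" "finite (coset_rep ` fst q)"
    using p q by (auto simp: carrier_P finite_coset_sets_def)
  have "snd p = snd q" "(SOME l. set l = coset_rep ` fst p) = (SOME l. set l = coset_rep ` fst q)"
    using eq by (simp_all add: encode_semidirect_def)
  then have "coset_rep ` fst p = coset_rep ` fst q"
    using someI_ex[OF finite_list[OF fin(1)]] someI_ex[OF finite_list[OF fin(2)]] by metis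
  moreover have "fst p \<subseteq> Y" "fst q \<subseteq> Y" using p q by (auto simp: carrier_P finite_coset_sets_def)
  ultimately have "fst p = fst q" using inj_on_coset_rep by (simp add: inj_on_image_eq_iff)
  then show "p = q" using \<open>snd p = snd q\<close> by (simp add: prod_eq_iff)
qed

lemma carrier_subset_if_determining:
  assumes determining: "\<And>(Q :: 'g list monoid) TQ g h. haus_topgroup Q TQ \<Longrightarrow>
      cont_hom G TG Q TQ g \<Longrightarrow> cont_hom G TG Q TQ h \<Longrightarrow> (\<forall>y\<in>H. g y = h y) \<Longrightarrow>
      (\<forall>y\<in>carrier G. g y = h y)"
  shows "carrier G \<subseteq> H"
proof
  fix y assume y: "y \<in> carrier G"
  define d where "d = inv_into (carrier P) encode_semidirect"
  define Q where "Q = \<lparr>carrier = encode_semidirect ` carrier P,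
    mult = (\<lambda>u v. encode_semidirect (d u \<otimes>\<^bsub>P\<^esub> d v)), one = encode_semidirect \<one>\<^bsub>P\<^esub>\<rparr>"
  define TQ where "TQ = pullback_topology (encode_semidirect ` carrier P) d TP"
  have Q: "haus_topgroup Q TQ \<and> cont_hom P TP Q TQ encode_semidirect"
    unfolding Q_def TQ_def d_def
    by (rule haus_topgroup_transfer[OF haus_topgroup_P inj_on_encode_semidirect])
  have "\<forall>z\<in>H. (encode_semidirect \<circ> (\<lambda>x. ({}, x))) z = (encode_semidirect \<circ> twisted_embedding G H) z"
    using twisted_embedding_eq_iff H_subset by (metis comp_apply subsetD)
  then have "encode_semidirect ({}, y) = encode_semidirect (twisted_embedding G H y)"
    using determining[OF conjunct1[OF Q] cont_hom_compose[OF cont_hom_trivial_embedding]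
        cont_hom_compose[OF cont_hom_twisted_embedding]] Q y by auto
  moreover have "({}, y) \<in> carrier P" "twisted_embedding G H y \<in> carrier P"
    using cont_hom_trivial_embedding cont_hom_twisted_embedding y
    by (auto simp: cont_hom_def hom_def)
  ultimately have "twisted_embedding G H y = ({}, y)"
    using inj_on_encode_semidirect by (simp add: inj_on_eq_iff)
  then show "y \<in> H" using twisted_embedding_eq_iff[OF y] by blast
qed

end

lemma set_mult_memI: "u \<in> U \<Longrightarrow> c \<in> C \<Longrightarrow> u \<otimes>\<^bsub>G\<^esub> c \<in> U <#>\<^bsub>G\<^esub> C"
  unfolding set_mult_def by blast

lemma set_mult_memE:
  "t \<in> U <#>\<^bsub>G\<^esub> C \<Longrightarrow> (\<And>u c. u \<in> U \<Longrightarrow> c \<in> C \<Longrightarrow> t = u \<otimes>\<^bsub>G\<^esub> c \<Longrightarrow> thesis) \<Longrightarrow> thesis"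
  unfolding set_mult_def by blast

lemma right_entourage_iff: "(C, D) \<in> right_entourage G H U \<longleftrightarrow>
    C \<in> lcosets G H \<and> D \<in> lcosets G H \<and> D \<subseteq> U <#>\<^bsub>G\<^esub> C"
proof
  assume "(C, D) \<in> right_entourage G H U"
  then obtain a b where "C = a <#\<^bsub>G\<^esub> H" "D = b <#\<^bsub>G\<^esub> H" "a \<in> carrier G" "b \<in> carrier G"
      "D \<subseteq> U <#>\<^bsub>G\<^esub> C"
    unfolding right_entourage_def by blast
  then show "C \<in> lcosets G H \<and> D \<in> lcosets G H \<and> D \<subseteq> U <#>\<^bsub>G\<^esub> C"
    unfolding lcosets_def by blast
next
  assume "C \<in> lcosets G H \<and> D \<in> lcosets G H \<and> D \<subseteq> U <#>\<^bsub>G\<^esub> C"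
  then obtain a b where "C = a <#\<^bsub>G\<^esub> H" "D = b <#\<^bsub>G\<^esub> H" "a \<in> carrier G" "b \<in> carrier G"
      "D \<subseteq> U <#>\<^bsub>G\<^esub> C"
    unfolding lcosets_def by blast
  then show "(C, D) \<in> right_entourage G H U"
    unfolding right_entourage_def by blast
qed

lemma right_entourage_subset: "right_entourage G H U \<subseteq> lcosets G H \<times> lcosets G H"
  by (rule subrelI) (simp add: right_entourage_iff)

lemma right_entourage_mono:
  assumes "U \<subseteq> U'"
  shows "right_entourage G H U \<subseteq> right_entourage G H U'"
proof (rule subrelI)
  fix C D assume "(C, D) \<in> right_entourage G H U"
  moreover have "U <#>\<^bsub>G\<^esub> C \<subseteq> U' <#>\<^bsub>G\<^esub> C" using assms by (rule mono_set_mult) simp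
  ultimately show "(C, D) \<in> right_entourage G H U'" unfolding right_entourage_iff by (meson order_trans)
qed

definition equiv_entourages :: "'g monoid \<Rightarrow> 'g topology \<Rightarrow> 'g set \<Rightarrow> ('g set \<times> 'g set) set set" where
  "equiv_entourages G T H = {R. equiv (lcosets G H) R \<and> right_unif_entourage G T H R}"

context topgroup
begin

text \<open>For a subgroup V, the relation D \<subseteq> V <#> C on cosets says that C and D lie in the same
  double coset V a H; so it is an equivalence relation.\<close>

lemma right_entourage_refl:
  assumes H: "subgroup H G" and V: "subgroup V G" and C: "C \<in> lcosets G H"
  shows "(C, C) \<in> right_entourage G H V"
proof -
  have "C \<subseteq> V <#> C"
  proof
    fix c assume c: "c \<in> C"
    then have "\<one> \<otimes> c \<in> V <#> C" by (intro set_mult_memI subgroup.one_closed[OF V])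
    then show "c \<in> V <#> C"
      using c lcosets_subset_carrier[OF subgroup.subset[OF H] C] by auto
  qed
  then show ?thesis using C by (simp add: right_entourage_iff)
qed

lemma right_entourage_sym:
  assumes H: "subgroup H G" and V: "subgroup V G" and CD: "(C, D) \<in> right_entourage G H V"
  shows "(D, C) \<in> right_entourage G H V"
proof -
  have C: "C \<in> lcosets G H" and D: "D \<in> lcosets G H" and DC: "D \<subseteq> V <#> C"
    using CD by (auto simp: right_entourage_iff)
  obtain a where a: "a \<in> carrier G" "C = a <# H" using C by (auto simp: lcosets_def)
  obtain b where b: "b \<in> carrier G" "D = b <# H" using D by (auto simp: lcosets_def)
  have HG: "H \<subseteq> carrier G" using H by (rule subgroup.subset)
  have "b \<in> V <#> C" using DC mem_own_l_coset[OF H b(1)] b(2) by blast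
  then obtain v c where vc: "v \<in> V" "c \<in> C" "b = v \<otimes> c" by (rule set_mult_memE)
  obtain h where h: "h \<in> H" "c = a \<otimes> h" using vc(2) a(2) unfolding l_coset_def by blast
  have v: "v \<in> carrier G" and hG: "h \<in> carrier G" using vc(1) h(1) V HG subgroup.subset by auto
  have "C \<subseteq> V <#> D"
  proof
    fix t assume "t \<in> C"
    then obtain h' where h': "h' \<in> H" "t = a \<otimes> h'" using a(2) unfolding l_coset_def by blast
    have h'G: "h' \<in> carrier G" using h'(1) HG by blast
    have "a \<otimes> h \<otimes> inv h = a" using a(1) hG by (simp add: m_assoc)
    then have "t = inv v \<otimes> (b \<otimes> (inv h \<otimes> h'))"
      using h'(2) vc(3) h(2) a(1) v hG h'G by (simp add: m_assoc[symmetric])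
    moreover have "b \<otimes> (inv h \<otimes> h') \<in> D"
      using b(2) h(1) h'(1) H unfolding l_coset_def
      by (blast intro: subgroup.m_closed subgroup.m_inv_closed)
    ultimately show "t \<in> V <#> D"
      using subgroup.m_inv_closed[OF V vc(1)] set_mult_memI by metis
  qed
  then show ?thesis using C D by (simp add: right_entourage_iff)
qed

lemma right_entourage_trans:
  assumes H: "subgroup H G" and V: "subgroup V G"
    and CD: "(C, D) \<in> right_entourage G H V" and DF: "(D, F) \<in> right_entourage G H V"
  shows "(C, F) \<in> right_entourage G H V"
proof -
  have C: "C \<in> lcosets G H" and F: "F \<in> lcosets G H" and DC: "D \<subseteq> V <#> C"
    and FD: "F \<subseteq> V <#> D" using CD DF by (auto simp: right_entourage_iff)
  have CG: "C \<subseteq> carrier G" using lcosets_subset_carrier[OF subgroup.subset[OF H] C] .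
  have "F \<subseteq> V <#> C"
  proof
    fix t assume "t \<in> F"
    with FD have "t \<in> V <#> D" by (rule subsetD)
    then obtain v1 d where 1: "v1 \<in> V" "d \<in> D" "t = v1 \<otimes> d" by (rule set_mult_memE)
    from DC 1(2) have "d \<in> V <#> C" by (rule subsetD)
    then obtain v2 c where 2: "v2 \<in> V" "c \<in> C" "d = v2 \<otimes> c" by (rule set_mult_memE)
    have "v1 \<in> carrier G" "v2 \<in> carrier G" "c \<in> carrier G"
      using 1(1) 2(1,2) CG subgroup.subset[OF V] by auto
    then have "t = (v1 \<otimes> v2) \<otimes> c" using 1(3) 2(3) by (simp add: m_assoc)
    then show "t \<in> V <#> C"
      using subgroup.m_closed[OF V 1(1) 2(1)] 2(2) set_mult_memI by metis
  qed
  then show ?thesis using C F by (simp add: right_entourage_iff)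
qed

lemma equiv_right_entourage_subgroup:
  assumes "subgroup H G" "subgroup V G"
  shows "equiv (lcosets G H) (right_entourage G H V)"
proof (rule equivI)
  show "right_entourage G H V \<subseteq> lcosets G H \<times> lcosets G H"
    by (rule right_entourage_subset)
  show "refl_on (lcosets G H) (right_entourage G H V)"
    by (rule refl_onI) (rule right_entourage_refl[OF assms])
  show "sym (right_entourage G H V)"
    using right_entourage_sym[OF assms] by (auto intro: symI)
  show "trans (right_entourage G H V)"
    using right_entourage_trans[OF assms] by (auto intro: transI)
qed

lemma nhd_one_openin: "openin T W \<Longrightarrow> \<one> \<in> W \<Longrightarrow> nhd_one G T W"
  unfolding nhd_one_def using openin_subset by blast

lemma right_unif_entourage_right_entourage:
  "nhd_one G T U \<Longrightarrow> right_unif_entourage G T H (right_entourage G H U)"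
  unfolding right_unif_entourage_def using right_entourage_subset by blast

lemma right_unif_entourage_openE:
  assumes "right_unif_entourage G T H E"
  obtains W where "openin T W" "\<one> \<in> W" "right_entourage G H W \<subseteq> E"
proof -
  obtain U where U: "nhd_one G T U" "right_entourage G H U \<subseteq> E"
    using assms unfolding right_unif_entourage_def by blast
  then obtain W where W: "openin T W" "\<one> \<in> W" "W \<subseteq> U" unfolding nhd_one_def by blast
  have "right_entourage G H W \<subseteq> E" using right_entourage_mono[OF W(3)] U(2) by (rule order_trans)
  with W(1,2) show thesis by (rule that)
qed

lemma right_unif_non_archimedean_if_non_archimedean:
  assumes H: "subgroup H G" and na: "non_archimedean_group G T"
  shows "right_unif_non_archimedean G T H"
  unfolding right_unif_non_archimedean_def
proof (intro allI impI)
  fix E assume "right_unif_entourage G T H E"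
  then obtain W where W: "openin T W" "\<one> \<in> W" "right_entourage G H W \<subseteq> E"
    by (rule right_unif_entourage_openE)
  then obtain V where V: "subgroup V G" "openin T V" "V \<subseteq> W"
    using na unfolding non_archimedean_group_def by blast
  have "right_unif_entourage G T H (right_entourage G H V)"
    by (intro right_unif_entourage_right_entourage nhd_one_openin V(2) subgroup.one_closed V(1))
  moreover have "right_entourage G H V \<subseteq> E" using right_entourage_mono[OF V(3)] W(3) by (rule order_trans)
  ultimately show "\<exists>R. right_unif_entourage G T H R \<and> equiv (lcosets G H) R \<and> R \<subseteq> E"
    using equiv_right_entourage_subgroup[OF H V(1)] by blast
qed

lemma right_entourage_l_coset:
  assumes H: "subgroup H G" and u: "u \<in> U" "u \<in> carrier G" and y: "y \<in> lcosets G H"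
  shows "(y, u <# y) \<in> right_entourage G H U"
proof -
  have "u <# y \<subseteq> U <#> y"
  proof
    fix t assume "t \<in> u <# y"
    then obtain c where "c \<in> y" "t = u \<otimes> c" unfolding l_coset_def by blast
    then show "t \<in> U <#> y" using set_mult_memI[OF u(1)] by simp
  qed
  then show ?thesis
    using y l_coset_in_lcosets[OF subgroup.subset[OF H] y u(2)] by (simp add: right_entourage_iff)
qed

lemma right_entourage_separating:
  assumes H: "subgroup H G" "closedin T H" and a: "a \<in> carrier G" and b: "b \<in> carrier G"
    and ne: "a <# H \<noteq> b <# H"
  obtains U where "openin T U" "\<one> \<in> U" "(a <# H, b <# H) \<notin> right_entourage G H U"
proof
  have "continuous_map T T (\<lambda>u. inv u \<otimes> b)"
    by (intro continuous_map_group_mult[OF topgroup] continuous_map_group_inv[OF topgroup]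
        continuous_map_group_const[OF topgroup]) (simp_all add: b continuous_map_id[unfolded id_def])
  moreover have "openin T (topspace T - (a <# H))"
    using closedin_l_coset[OF H a] by (simp add: closedin_def)
  ultimately show "openin T {u \<in> topspace T. inv u \<otimes> b \<in> topspace T - (a <# H)}"
    by (rule openin_continuous_map_preimage)
  have "b \<notin> a <# H" using l_repr_independence[OF _ a H(1)] ne by blast
  then show "\<one> \<in> {u \<in> topspace T. inv u \<otimes> b \<in> topspace T - (a <# H)}"
    using b topspace_carrier by simp
  show "(a <# H, b <# H) \<notin> right_entourage G H {u \<in> topspace T. inv u \<otimes> b \<in> topspace T - (a <# H)}"
  proof
    assume "(a <# H, b <# H) \<in> right_entourage G H {u \<in> topspace T. inv u \<otimes> b \<in> topspace T - (a <# H)}"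
    then have "b <# H \<subseteq> {u \<in> topspace T. inv u \<otimes> b \<in> topspace T - (a <# H)} <#> (a <# H)"
      by (simp add: right_entourage_iff)
    then have "b \<in> {u \<in> topspace T. inv u \<otimes> b \<in> topspace T - (a <# H)} <#> (a <# H)"
      using mem_own_l_coset[OF H(1) b] by (rule subsetD)
    then obtain u c where u: "u \<in> {u \<in> topspace T. inv u \<otimes> b \<in> topspace T - (a <# H)}"
      and c: "c \<in> a <# H" and "b = u \<otimes> c" by (rule set_mult_memE)
    moreover have "u \<in> carrier G" "c \<in> carrier G"
      using u c topspace_carrier l_coset_subset_G[OF subgroup.subset[OF H(1)] a]
      by auto
    ultimately show False using u by (simp add: m_assoc[symmetric])
  qed
qed

text \<open>Continuity of conjugation by x.\<close>

lemma right_entourage_conjugate: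
  assumes H: "subgroup H G" and x: "x \<in> carrier G" and U: "openin T U" "\<one> \<in> U"
  obtains W where "openin T W" "\<one> \<in> W"
    "\<And>y z. (y, z) \<in> right_entourage G H W \<Longrightarrow> (x <# y, x <# z) \<in> right_entourage G H U"
proof
  let ?W = "{v \<in> topspace T. x \<otimes> v \<otimes> inv x \<in> U}"
  have "continuous_map T T (\<lambda>v. x \<otimes> v \<otimes> inv x)"
    by (intro continuous_map_group_mult[OF topgroup] continuous_map_group_const[OF topgroup])
      (simp_all add: x continuous_map_id[unfolded id_def])
  then show "openin T ?W" using U(1) by (rule openin_continuous_map_preimage)
  show "\<one> \<in> ?W" using U(2) x topspace_carrier by simp
  fix y z assume "(y, z) \<in> right_entourage G H ?W"
  then have y: "y \<in> lcosets G H" and z: "z \<in> lcosets G H" and zy: "z \<subseteq> ?W <#> y"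
    by (auto simp: right_entourage_iff)
  have "x <# z \<subseteq> U <#> (x <# y)"
  proof
    fix t assume "t \<in> x <# z"
    then obtain s where s: "s \<in> z" "t = x \<otimes> s" unfolding l_coset_def by blast
    from zy s(1) have "s \<in> ?W <#> y" by (rule subsetD)
    then obtain v c where v: "v \<in> ?W" and c: "c \<in> y" and "s = v \<otimes> c" by (rule set_mult_memE)
    moreover have "v \<in> carrier G" "c \<in> carrier G"
      using v c topspace_carrier lcosets_subset_carrier[OF subgroup.subset[OF H] y]
      by auto
    moreover have "inv x \<otimes> (x \<otimes> c) = c" using x \<open>c \<in> carrier G\<close> by (simp add: m_assoc[symmetric])
    ultimately have "t = (x \<otimes> v \<otimes> inv x) \<otimes> (x \<otimes> c)" using s(2) x by (simp add: m_assoc)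
    moreover have "x \<otimes> c \<in> x <# y" using c unfolding l_coset_def by blast
    moreover have "x \<otimes> v \<otimes> inv x \<in> U" using v by simp
    ultimately show "t \<in> U <#> (x <# y)" using set_mult_memI by metis
  qed
  then show "(x <# y, x <# z) \<in> right_entourage G H U"
    using l_coset_in_lcosets[OF subgroup.subset[OF H] y x] l_coset_in_lcosets[OF subgroup.subset[OF H] z x]
    by (simp add: right_entourage_iff)
qed

lemma equiv_entourage_fixes_l_coset:
  assumes H: "subgroup H G" and R: "equiv (lcosets G H) R" "right_entourage G H U \<subseteq> R"
    and u: "u \<in> U" "u \<in> carrier G" and y: "y \<in> lcosets G H"
  shows "(u <# y, y) \<in> R"
  using right_entourage_l_coset[OF H u y] R by (auto elim: equivE symE)

lemma equiv_entourage_l_coset_compatible: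
  assumes H: "subgroup H G" and R: "equiv (lcosets G H) R" "right_entourage G H U \<subseteq> R"
    and u: "u \<in> U" "u \<in> carrier G" and yz: "(y, z) \<in> R"
  shows "(u <# y, u <# z) \<in> R"
proof -
  have "y \<in> lcosets G H" "z \<in> lcosets G H" using R(1) yz by (auto simp: equiv_def)
  then have "(u <# y, y) \<in> R" "(z, u <# z) \<in> R"
    using equiv_entourage_fixes_l_coset[OF H R u] R(1) by (auto elim: equivE symE)
  then show ?thesis using yz R(1) by (meson equivE transD)
qed

lemma openin_subset_carrier: "openin T U \<Longrightarrow> U \<subseteq> carrier G"
  using openin_subset topspace_carrier by blast

lemma equiv_entourages_below:
  assumes na: "right_unif_non_archimedean G T H" and U: "openin T U" "\<one> \<in> U"
  obtains R where "R \<in> equiv_entourages G T H" "R \<subseteq> right_entourage G H U"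
proof -
  have "right_unif_entourage G T H (right_entourage G H U)"
    by (rule right_unif_entourage_right_entourage[OF nhd_one_openin[OF U]])
  then obtain R where "right_unif_entourage G T H R" "equiv (lcosets G H) R" "R \<subseteq> right_entourage G H U"
    using na unfolding right_unif_non_archimedean_def by blast
  then show thesis by (intro that) (simp_all add: equiv_entourages_def)
qed

lemma equiv_entourages_openE:
  assumes "R \<in> equiv_entourages G T H"
  obtains U where "openin T U" "\<one> \<in> U" "right_entourage G H U \<subseteq> R"
proof -
  have "right_unif_entourage G T H R" using assms by (simp add: equiv_entourages_def)
  then obtain U where "openin T U" "\<one> \<in> U" "right_entourage G H U \<subseteq> R"
    by (rule right_unif_entourage_openE)
  then show thesis by (rule that)
qed

lemma equiv_entourages_directed:
  assumes na: "right_unif_non_archimedean G T H"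
    and R: "R1 \<in> equiv_entourages G T H" "R2 \<in> equiv_entourages G T H"
  shows "\<exists>R3\<in>equiv_entourages G T H. R3 \<subseteq> R1 \<inter> R2"
proof -
  obtain U1 where U1: "openin T U1" "\<one> \<in> U1" "right_entourage G H U1 \<subseteq> R1"
    using R(1) by (rule equiv_entourages_openE)
  obtain U2 where U2: "openin T U2" "\<one> \<in> U2" "right_entourage G H U2 \<subseteq> R2"
    using R(2) by (rule equiv_entourages_openE)
  have "openin T (U1 \<inter> U2)" "\<one> \<in> U1 \<inter> U2" using U1 U2 by auto
  then obtain R3 where R3: "R3 \<in> equiv_entourages G T H" "R3 \<subseteq> right_entourage G H (U1 \<inter> U2)"
    by (rule equiv_entourages_below[OF na])
  have "right_entourage G H (U1 \<inter> U2) \<subseteq> R1 \<inter> R2"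
    using order_trans[OF right_entourage_mono U1(3)] order_trans[OF right_entourage_mono U2(3)]
    by (meson Int_greatest inf_le1 inf_le2)
  then show ?thesis using R3 by blast
qed

lemma coset_equiv_family_equiv_entourages:
  assumes T2: "Hausdorff_space T" and H: "subgroup H G" "closedin T H"
    and na: "right_unif_non_archimedean G T H"
  shows "coset_equiv_family G T H (equiv_entourages G T H)"
proof (intro coset_equiv_family.intro coset_equiv_family_axioms.intro topgroup_axioms T2 H(1)
    equiv_entourages_directed[OF na])
  have "openin T (carrier G)" using openin_topspace[of T] by (simp add: topspace_carrier)
  then obtain R where "R \<in> equiv_entourages G T H"
    using equiv_entourages_below[OF na] one_closed by blast
  then show "equiv_entourages G T H \<noteq> {}" by blast
next
  fix y z assume "y \<in> lcosets G H" "z \<in> lcosets G H" "y \<noteq> z"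
  then obtain a b where ab: "a \<in> carrier G" "b \<in> carrier G" "y = a <# H" "z = b <# H"
    and "a <# H \<noteq> b <# H" by (auto simp: lcosets_def)
  then obtain U where "openin T U" "\<one> \<in> U" "(y, z) \<notin> right_entourage G H U"
    by (metis right_entourage_separating[OF H ab(1,2)])
  then show "\<exists>R\<in>equiv_entourages G T H. (y, z) \<notin> R"
    using equiv_entourages_below[OF na] by blast
next
  fix x R assume x: "x \<in> carrier G" and R: "R \<in> equiv_entourages G T H"
  obtain U where U: "openin T U" "\<one> \<in> U" "right_entourage G H U \<subseteq> R"
    using R by (rule equiv_entourages_openE)
  obtain W where W: "openin T W" "\<one> \<in> W"
    and conj: "\<And>y z. (y, z) \<in> right_entourage G H W \<Longrightarrow> (x <# y, x <# z) \<in> right_entourage G H U"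
    using right_entourage_conjugate[OF H(1) x U(1,2)] by blast
  obtain R' where "R' \<in> equiv_entourages G T H" "R' \<subseteq> right_entourage G H W"
    by (rule equiv_entourages_below[OF na W])
  then show "\<exists>R'\<in>equiv_entourages G T H. \<forall>y z. (y, z) \<in> R' \<longrightarrow> (x <# y, x <# z) \<in> R"
    using conj U(3) by blast
next
  fix y R assume y: "y \<in> lcosets G H" and R: "R \<in> equiv_entourages G T H"
  obtain U where U: "openin T U" "\<one> \<in> U" "right_entourage G H U \<subseteq> R"
    using R by (rule equiv_entourages_openE)
  have "(u <# y, y) \<in> R" if "u \<in> U" for u
    using equiv_entourage_fixes_l_coset[OF H(1) _ U(3) that _ y] R
      openin_subset_carrier[OF U(1)] that by (auto simp: equiv_entourages_def)
  then show "\<exists>W. openin T W \<and> \<one> \<in> W \<and> (\<forall>u\<in>W. (u <# y, y) \<in> R)" using U by blast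
next
  fix R assume R: "R \<in> equiv_entourages G T H"
  then obtain U where U: "openin T U" "\<one> \<in> U" "right_entourage G H U \<subseteq> R"
    by (rule equiv_entourages_openE)
  have "(u <# y, u <# z) \<in> R" if "u \<in> U" "(y, z) \<in> R" for u y z
    using equiv_entourage_l_coset_compatible[OF H(1) _ U(3) that(1) _ that(2)] R
      openin_subset_carrier[OF U(1)] that(1) by (auto simp: equiv_entourages_def)
  then show "\<exists>W R'. openin T W \<and> \<one> \<in> W \<and> R' \<in> equiv_entourages G T H \<and>
      (\<forall>u\<in>W. \<forall>y z. (y, z) \<in> R' \<longrightarrow> (u <# y, u <# z) \<in> R)" using U R by blast
qed (simp add: equiv_entourages_def)

lemma l_coset_fixed:
  assumes H: "subgroup H G" and a: "a \<in> carrier G" and u: "u \<in> carrier G"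
    and conj: "inv a \<otimes> u \<otimes> a \<in> H"
  shows "u <# (a <# H) = a <# H"
proof -
  have "u \<otimes> a = a \<otimes> (inv a \<otimes> u \<otimes> a)" using a u by (simp add: m_assoc[symmetric])
  then have "u \<otimes> a \<in> a <# H" using conj unfolding l_coset_def by force
  then have "a <# H = (u \<otimes> a) <# H" by (rule l_repr_independence[OF _ a H])
  then show ?thesis using lcos_m_assoc[OF subgroup.subset[OF H] u a] by simp
qed

text \<open>For open H the identity relation will do: the stabilizer of a coset a <# H is the
  open subgroup a H a\<inverse>.\<close>

lemma coset_equiv_family_open_subgroup:
  assumes T2: "Hausdorff_space T" and H: "subgroup H G" and op: "openin T H"
  shows "coset_equiv_family G T H {Id_on (lcosets G H)}"
proof (intro coset_equiv_family.intro coset_equiv_family_axioms.intro topgroup_axioms T2 H)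
  have ts: "topspace T = carrier G" by (rule topspace_carrier)
  have lc: "x <# C \<in> lcosets G H" if "C \<in> lcosets G H" "x \<in> carrier G" for x C
    using l_coset_in_lcosets[OF subgroup.subset[OF H]] that .
  show "\<And>R. R \<in> {Id_on (lcosets G H)} \<Longrightarrow> equiv (lcosets G H) R"
    by (auto intro!: equivI refl_onI symI transI)
  show "\<And>x R. x \<in> carrier G \<Longrightarrow> R \<in> {Id_on (lcosets G H)} \<Longrightarrow>
      \<exists>R'\<in>{Id_on (lcosets G H)}. \<forall>y z. (y, z) \<in> R' \<longrightarrow> (x <# y, x <# z) \<in> R"
    using lc by auto
  show "\<And>R. R \<in> {Id_on (lcosets G H)} \<Longrightarrow> \<exists>W R'. openin T W \<and> \<one> \<in> W \<and>
      R' \<in> {Id_on (lcosets G H)} \<and> (\<forall>u\<in>W. \<forall>y z. (y, z) \<in> R' \<longrightarrow> (u <# y, u <# z) \<in> R)"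
    using lc openin_topspace[of T] ts by (intro exI[of _ "carrier G"]) auto
  fix y R assume y: "y \<in> lcosets G H" and R: "R \<in> {Id_on (lcosets G H)}"
  obtain a where a: "a \<in> carrier G" "y = a <# H" using y by (auto simp: lcosets_def)
  have "continuous_map T T (\<lambda>u. inv a \<otimes> u \<otimes> a)"
    by (intro continuous_map_group_mult[OF topgroup] continuous_map_group_const[OF topgroup])
      (simp_all add: a continuous_map_id[unfolded id_def])
  then have "openin T {u \<in> topspace T. inv a \<otimes> u \<otimes> a \<in> H}"
    using op by (rule openin_continuous_map_preimage)
  moreover have "\<one> \<in> {u \<in> topspace T. inv a \<otimes> u \<otimes> a \<in> H}"
    using a ts subgroup.one_closed[OF H] by simp
  moreover have "(u <# y, y) \<in> R" if "u \<in> {u \<in> topspace T. inv a \<otimes> u \<otimes> a \<in> H}" for u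
    using l_coset_fixed[OF H a(1)] that a(2) R y ts by auto
  ultimately show "\<exists>W. openin T W \<and> \<one> \<in> W \<and> (\<forall>u\<in>W. (u <# y, y) \<in> R)" by blast
qed auto

end

theorem theorem7p8:
  fixes M :: "'m monoid" and TM :: "'m topology"
    and G :: "'g monoid" and TG :: "'g topology" and f :: "'m \<Rightarrow> 'g"
  assumes epi: "tgr_epi M TM G TG f"
    and H_def: "H = TG closure_of (f ` carrier M)"
    and cond: "right_unif_non_archimedean G TG H \<or> non_archimedean_group G TG \<or> openin TG H"
  shows "TG closure_of (f ` carrier M) = carrier G"
proof -
  have hM: "haus_topgroup M TM" and hG: "haus_topgroup G TG" and f: "cont_hom M TM G TG f"
    using epi by (auto simp: tgr_epi_def)
  interpret topgroup G TG using hG by (simp add: topgroup_def haus_topgroup_def)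
  have T2: "Hausdorff_space TG" using hG by (simp add: haus_topgroup_def)
  interpret f: group_hom M G f
    using hM f by (simp add: group_hom_def group_hom_axioms_def haus_topgroup_def
        topological_group_def cont_hom_def is_group)
  have H: "subgroup H G" "closedin TG H"
    unfolding H_def using subgroup_closure_of[OF f.img_is_subgroup] by simp_all
  have fH: "f ` carrier M \<subseteq> H"
    unfolding H_def using closure_of_subset f.img_is_subgroup subgroup.subset topspace_carrier by metis
  obtain RR where RR: "coset_equiv_family G TG H RR"
    using cond right_unif_non_archimedean_if_non_archimedean[OF H(1)]
      coset_equiv_family_equiv_entourages[OF T2 H] coset_equiv_family_open_subgroup[OF T2 H(1)] by blast
  have "carrier G \<subseteq> H"
  proof (rule coset_equiv_family.carrier_subset_if_determining[OF RR])
    fix Q :: "'g list monoid" and TQ g h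
    assume "haus_topgroup Q TQ" "cont_hom G TG Q TQ g" "cont_hom G TG Q TQ h" "\<forall>y\<in>H. g y = h y"
    moreover from this(4) fH have "\<forall>x\<in>carrier M. g (f x) = h (f x)" by blast
    ultimately show "\<forall>y\<in>carrier G. g y = h y" using epi unfolding tgr_epi_def by blast
  qed
  then show ?thesis using H(1) subgroup.subset H_def by blast
qed

end
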